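(* Let $\mathcal D$ be a Dirac operator acting on sections of a bundle $\mathbb S$ over a closed Riemannian manifold. Suppose there are a constant $\delta_4\ge0$, smooth sections $\psi_1,\dots,\psi_L$ of $\mathbb S$ and real numbers $\mu_1,\dots,\mu_L$ such that: (i) $\{\psi_l\}_{l=1}^L$ is orthonormal in $L^2$; (ii) $\int|\mathcal D\psi_l-\mu_l\psi_l|^2\le\delta_4$ for all $l$; (iii) $\int\langle\mathcal D\psi_l,\psi_{l'}\rangle=0$ for all $l\ne l'$; (iv) $\sum_{1\le l,l'\le L,\ l\ne l'}\big|\int\langle\mathcal D\psi_l,\mathcal D\psi_{l'}\rangle\big|\le\delta_4$. Then there exist $L$ eigenvalues $\lambda_1,\dots,\lambda_L$ of $\mathcal D$ (counted with multiplicity) such that $|\lambda_l-\mu_l|\le\sqrt{2\delta_4}$ for all $l$.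
   Context: A Dirac operator here is a first-order self-adjoint elliptic operator of Dirac type; on a closed manifold it has discrete real spectrum with finite multiplicities, and integrals are over the manifold with respect to the Riemannian volume form. *)

theory Defs
  imports Complex_Main
begin

text \<open>Smooth sections of the (complex) bundle form a complex vector space V, realised as a
space of complex-valued functions on an abstract index type 's (every complex vector
space embeds this way).  The L2 inner product  (phi, psi) = integral of pointwise
Hermitian product  is a Hermitian form h on V (linear in the first argument).\<close>

definition cscale :: "complex \<Rightarrow> ('s \<Rightarrow> complex) \<Rightarrow> ('s \<Rightarrow> complex)" where
  "cscale c x = (\<lambda>s. c * x s)"

definition cdiff :: "('s \<Rightarrow> complex) \<Rightarrow> ('s \<Rightarrow> complex) \<Rightarrow> ('s \<Rightarrow> complex)" where
  "cdiff x y = (\<lambda>s. x s - y s)"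

definition cadd :: "('s \<Rightarrow> complex) \<Rightarrow> ('s \<Rightarrow> complex) \<Rightarrow> ('s \<Rightarrow> complex)" where
  "cadd x y = (\<lambda>s. x s + y s)"

definition csubspace :: "('s \<Rightarrow> complex) set \<Rightarrow> bool" where
  "csubspace V \<longleftrightarrow> (\<lambda>s. 0) \<in> V \<and> (\<forall>x\<in>V. \<forall>y\<in>V. cadd x y \<in> V)
     \<and> (\<forall>c. \<forall>x\<in>V. cscale c x \<in> V)"

definition hermitian_form ::
  "('s \<Rightarrow> complex) set \<Rightarrow> (('s \<Rightarrow> complex) \<Rightarrow> ('s \<Rightarrow> complex) \<Rightarrow> complex) \<Rightarrow> bool" where
  "hermitian_form V h \<longleftrightarrow>
     (\<forall>x\<in>V. \<forall>y\<in>V. \<forall>z\<in>V. h (cadd x y) z = h x z + h y z)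
   \<and> (\<forall>c. \<forall>x\<in>V. \<forall>y\<in>V. h (cscale c x) y = c * h x y)
   \<and> (\<forall>x\<in>V. \<forall>y\<in>V. h x y = cnj (h y x))
   \<and> (\<forall>x\<in>V. Re (h x x) \<ge> 0 \<and> (h x x = 0 \<longrightarrow> x = (\<lambda>s. 0)))"

definition sqnorm :: "(('s \<Rightarrow> complex) \<Rightarrow> ('s \<Rightarrow> complex) \<Rightarrow> complex) \<Rightarrow> ('s \<Rightarrow> complex) \<Rightarrow> real" where
  "sqnorm h x = Re (h x x)"

text \<open>A Dirac-type operator D on V: complex linear, symmetric (formally self-adjoint) and
with the spectral properties of a self-adjoint elliptic operator on a closed manifold:
a complete L2-orthonormal system of smooth eigensections e k with real eigenvalues
lam k, such that each bounded interval contains only finitely many of the lam k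
(discrete spectrum, finite multiplicities).  The eigenvalues counted with multiplicity
are exactly the list lam 0, lam 1, ...\<close>
definition dirac_model ::
  "('s \<Rightarrow> complex) set \<Rightarrow> (('s \<Rightarrow> complex) \<Rightarrow> ('s \<Rightarrow> complex) \<Rightarrow> complex)
   \<Rightarrow> (('s \<Rightarrow> complex) \<Rightarrow> ('s \<Rightarrow> complex)) \<Rightarrow> (nat \<Rightarrow> ('s \<Rightarrow> complex)) \<Rightarrow> (nat \<Rightarrow> real) \<Rightarrow> bool" where
  "dirac_model V h D e lam \<longleftrightarrow>
     csubspace V \<and> hermitian_form V h
   \<and> (\<forall>x\<in>V. D x \<in> V)
   \<and> (\<forall>x\<in>V. \<forall>y\<in>V. D (cadd x y) = cadd (D x) (D y))
   \<and> (\<forall>c. \<forall>x\<in>V. D (cscale c x) = cscale c (D x))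
   \<and> (\<forall>x\<in>V. \<forall>y\<in>V. h (D x) y = h x (D y))
   \<and> (\<forall>k. e k \<in> V)
   \<and> (\<forall>j k. h (e j) (e k) = (if j = k then 1 else 0))
   \<and> (\<forall>k. D (e k) = cscale (complex_of_real (lam k)) (e k))
   \<and> (\<forall>x\<in>V. (\<lambda>n. sqnorm h (cdiff x (\<lambda>s. \<Sum>k<n. h x (e k) * e k s))) \<longlonglongrightarrow> 0)
   \<and> (\<forall>c::real. finite {k. \<bar>lam k\<bar> \<le> c})"

end

theory Submission
  imports Defs
begin

(* Fix an interval [a, b] with midpoint g and half-length r, put eps = sqrt (2 delta), and let S be
   the set of indices l with mu l in [a, b].  Hypotheses (i)-(iv) give
   |(D - g) phi|^2 <= (r + eps)^2 |phi|^2 for every phi in the span of the psi l, l in S: the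
   diagonal terms contribute at most (r + eps)^2 - delta, and the off-diagonal ones, where D - g
   may be replaced by D, at most delta.  If fewer than card S eigenvalues lay in
   [a - eps, b + eps], some nonzero such phi would be orthogonal to all their eigensections, and
   Parseval's identity would give the opposite strict inequality.  So every interval contains at
   most as many mu l as its eps-neighbourhood contains eigenvalues, and matching the mu l greedily
   in increasing order yields the eigenvalues. *)

lemma homogeneous_system_nontrivial_solution:
  fixes f :: "'i \<Rightarrow> 'j \<Rightarrow> 'a::field"
  assumes "finite J" "finite I" "card J < card I"
  shows "\<exists>c. (\<exists>i\<in>I. c i \<noteq> 0) \<and> (\<forall>j\<in>J. (\<Sum>i\<in>I. c i * f i j) = 0)"
  using assms
proof (induction J arbitrary: I f rule: finite_induct)
  case empty
  then have "I \<noteq> {}" by auto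
  then show ?case by (intro exI[of _ "\<lambda>_. 1"]) auto
next
  case (insert j J)
  show ?case
  proof (cases "\<forall>i\<in>I. f i j = 0")
    case True
    have "card J < card I" using insert by auto
    from insert.IH[OF insert.prems(1) this] obtain c
      where "\<exists>i\<in>I. c i \<noteq> 0" "\<forall>j\<in>J. (\<Sum>i\<in>I. c i * f i j) = 0"
      by blast
    with True show ?thesis by auto
  next
    case False
    then obtain i0 where i0: "i0 \<in> I" "f i0 j \<noteq> 0" by auto
    \<comment> \<open>Gaussian elimination: use the equation j to eliminate the unknown i0.\<close>
    define f' where "f' i j' = f i j' - f i j / f i0 j * f i0 j'" for i j'
    have "card J < card (I - {i0})" "finite (I - {i0})"
      using insert i0 by auto
    from insert.IH[OF this(2,1), of f'] obtain c' where
      c': "\<exists>i\<in>I - {i0}. c' i \<noteq> 0" "\<forall>j'\<in>J. (\<Sum>i\<in>I - {i0}. c' i * f' i j') = 0"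
      by blast
    define A where "A = (\<Sum>i\<in>I - {i0}. c' i * f i j)"
    define c where "c = c'(i0 := - A / f i0 j)"
    have split: "(\<Sum>i\<in>I. c i * f i j') = c i0 * f i0 j' + (\<Sum>i\<in>I - {i0}. c' i * f i j')" for j'
      using i0 insert.prems(1) by (simp add: sum.remove c_def)
    have "(\<Sum>i\<in>I. c i * f i j') = 0" if "j' \<in> insert j J" for j'
    proof (cases "j' = j")
      case True
      then show ?thesis using i0 unfolding split by (simp add: c_def A_def)
    next
      case False
      then have "0 = (\<Sum>i\<in>I - {i0}. c' i * f' i j')" using c' that by auto
      also have "\<dots> = (\<Sum>i\<in>I - {i0}. c' i * f i j') - A / f i0 j * f i0 j'"
        by (simp add: f'_def A_def algebra_simps sum_subtractf sum_distrib_left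
            sum_divide_distrib sum_distrib_right)
      finally show ?thesis unfolding split by (simp add: c_def)
    qed
    moreover have "\<exists>i\<in>I. c i \<noteq> 0" using c' by (auto simp: c_def)
    ultimately show ?thesis by blast
  qed
qed

lemma hall_condition_remove_minimal:
  fixes \<mu> :: "'i \<Rightarrow> real" and lam :: "'k \<Rightarrow> real"
  assumes I: "finite I" and K: "\<And>a b. finite {k\<in>K. a \<le> lam k \<and> lam k \<le> b}"
    and hall: "\<And>\<alpha> \<beta>. card {l\<in>I. \<alpha> \<le> \<mu> l \<and> \<mu> l \<le> \<beta>}
                  \<le> card {k\<in>K. \<alpha> - \<epsilon> \<le> lam k \<and> lam k \<le> \<beta> + \<epsilon>}"
    and l0: "l0 \<in> I" "\<forall>l\<in>I. \<mu> l0 \<le> \<mu> l"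
    and k0: "k0 \<in> K" "\<mu> l0 - \<epsilon> \<le> lam k0" "lam k0 \<le> \<mu> l0 + \<epsilon>"
    and k0_min: "\<And>k. k \<in> K \<Longrightarrow> \<mu> l0 - \<epsilon> \<le> lam k \<Longrightarrow> lam k \<le> \<mu> l0 + \<epsilon> \<Longrightarrow> lam k0 \<le> lam k"
  shows "card {l\<in>I - {l0}. \<alpha> \<le> \<mu> l \<and> \<mu> l \<le> \<beta>}
           \<le> card {k\<in>K - {k0}. \<alpha> - \<epsilon> \<le> lam k \<and> lam k \<le> \<beta> + \<epsilon>}"
proof -
  define S where "S = {l\<in>I. \<alpha> \<le> \<mu> l \<and> \<mu> l \<le> \<beta>}"
  define T where "T = {k\<in>K. \<alpha> - \<epsilon> \<le> lam k \<and> lam k \<le> \<beta> + \<epsilon>}"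
  have eqs: "{l\<in>I - {l0}. \<alpha> \<le> \<mu> l \<and> \<mu> l \<le> \<beta>} = S - {l0}"
    "{k\<in>K - {k0}. \<alpha> - \<epsilon> \<le> lam k \<and> lam k \<le> \<beta> + \<epsilon>} = T - {k0}"
    by (auto simp: S_def T_def)
  have fin: "finite S" "finite T" using I K by (simp_all add: S_def T_def)
  have ST: "card S \<le> card T" unfolding S_def T_def by (rule hall)
  consider "k0 \<notin> T" | "l0 \<in> S" | "S = {}" | "k0 \<in> T" "l0 \<notin> S" "S \<noteq> {}" by blast
  then have "card (S - {l0}) \<le> card (T - {k0})"
  proof cases
    case 1
    have "card (S - {l0}) \<le> card S" by (rule card_Diff1_le)
    also have "\<dots> \<le> card T" by (rule ST)
    also have "\<dots> = card (T - {k0})" using 1 by simp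
    finally show ?thesis .
  next
    case 2
    then show ?thesis using ST fin by (cases "k0 \<in> T") (auto simp: card_Diff_singleton)
  next
    case 3
    then show ?thesis by simp
  next
    case 4
    \<comment> \<open>All of S lies above \<mu> l0, so the window starting at \<mu> l0 counts S together with l0;
      the eigenvalues it gains lie below \<alpha> - \<epsilon> and hence below lam k0, which is impossible.\<close>
    then obtain l1 where "l1 \<in> S" by auto
    then have "\<mu> l0 \<le> \<beta>" using l0 by (auto simp: S_def)
    define S2 where "S2 = {l\<in>I. \<mu> l0 \<le> \<mu> l \<and> \<mu> l \<le> \<beta>}"
    define T2 where "T2 = {k\<in>K. \<mu> l0 - \<epsilon> \<le> lam k \<and> lam k \<le> \<beta> + \<epsilon>}"
    have "insert l0 S \<subseteq> S2" using \<open>\<mu> l0 \<le> \<beta>\<close> l0 by (auto simp: S_def S2_def)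
    then have "card S + 1 \<le> card S2"
      using 4 fin I card_mono[of S2 "insert l0 S"] by (simp add: S2_def)
    also have "card S2 \<le> card T2" unfolding S2_def T2_def by (rule hall)
    also have "T2 \<subseteq> T"
    proof
      fix k assume k: "k \<in> T2"
      have "\<alpha> - \<epsilon> \<le> lam k0" using 4 by (simp add: T_def)
      show "k \<in> T"
      proof (rule ccontr)
        assume "k \<notin> T"
        then have "lam k < \<alpha> - \<epsilon>" using k by (auto simp: T_def T2_def)
        moreover have "lam k \<le> \<mu> l0 + \<epsilon>"
          using \<open>lam k < \<alpha> - \<epsilon>\<close> \<open>\<alpha> - \<epsilon> \<le> lam k0\<close> k0(3) by linarith
        ultimately show False
          using k0_min[of k] k \<open>\<alpha> - \<epsilon> \<le> lam k0\<close> by (auto simp: T2_def)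
      qed
    qed
    then have "card T2 \<le> card T" using fin by (intro card_mono)
    finally show ?thesis using 4 fin by (simp add: card_Diff_singleton)
  qed
  then show ?thesis by (simp only: eqs)
qed

lemma interval_hall_matching:
  fixes \<mu> :: "'i \<Rightarrow> real" and lam :: "'k \<Rightarrow> real"
  assumes "finite I"
    and "\<And>a b. finite {k\<in>K. a \<le> lam k \<and> lam k \<le> b}"
    and "\<And>\<alpha> \<beta>. card {l\<in>I. \<alpha> \<le> \<mu> l \<and> \<mu> l \<le> \<beta>}
                  \<le> card {k\<in>K. \<alpha> - \<epsilon> \<le> lam k \<and> lam k \<le> \<beta> + \<epsilon>}"
  shows "\<exists>\<kappa>. inj_on \<kappa> I \<and> \<kappa> ` I \<subseteq> K \<and> (\<forall>l\<in>I. \<bar>lam (\<kappa> l) - \<mu> l\<bar> \<le> \<epsilon>)"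
  using assms
proof (induction "card I" arbitrary: I K)
  case 0
  then show ?case by auto
next
  case (Suc n)
  \<comment> \<open>Greedy step: match the smallest \<mu> l0 with the smallest admissible eigenvalue.\<close>
  then have "I \<noteq> {}" by auto
  obtain l0 where l0: "l0 \<in> I" "\<forall>l\<in>I. \<mu> l0 \<le> \<mu> l"
    using Suc.prems(1) \<open>I \<noteq> {}\<close> by (meson arg_min_if_finite(1) arg_min_least)
  define W where "W = {k\<in>K. \<mu> l0 - \<epsilon> \<le> lam k \<and> lam k \<le> \<mu> l0 + \<epsilon>}"
  have "finite W" using Suc.prems(2) by (simp add: W_def)
  have "l0 \<in> {l\<in>I. \<mu> l0 \<le> \<mu> l \<and> \<mu> l \<le> \<mu> l0}" using l0 by auto
  then have "0 < card {l\<in>I. \<mu> l0 \<le> \<mu> l \<and> \<mu> l \<le> \<mu> l0}"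
    using Suc.prems(1) by (auto simp: card_gt_0_iff)
  also have "\<dots> \<le> card W" unfolding W_def by (rule Suc.prems(3))
  finally have "W \<noteq> {}" by auto
  obtain k0 where k0: "k0 \<in> W" "\<forall>k\<in>W. lam k0 \<le> lam k"
    using \<open>finite W\<close> \<open>W \<noteq> {}\<close> by (meson arg_min_if_finite(1) arg_min_least)
  have "\<exists>\<kappa>. inj_on \<kappa> (I - {l0}) \<and> \<kappa> ` (I - {l0}) \<subseteq> K - {k0}
      \<and> (\<forall>l\<in>I - {l0}. \<bar>lam (\<kappa> l) - \<mu> l\<bar> \<le> \<epsilon>)"
  proof (rule Suc.hyps(1))
    show "n = card (I - {l0})" using Suc.hyps(2) l0 Suc.prems(1) by simp
    show "finite (I - {l0})" using Suc.prems(1) by simp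
    show "finite {k\<in>K - {k0}. a \<le> lam k \<and> lam k \<le> b}" for a b
      using Suc.prems(2)[of a b] by (rule rev_finite_subset) auto
    show "card {l\<in>I - {l0}. \<alpha> \<le> \<mu> l \<and> \<mu> l \<le> \<beta>}
        \<le> card {k\<in>K - {k0}. \<alpha> - \<epsilon> \<le> lam k \<and> lam k \<le> \<beta> + \<epsilon>}" for \<alpha> \<beta>
      using k0 by (intro hall_condition_remove_minimal[OF Suc.prems l0]) (auto simp: W_def)
  qed
  then obtain \<kappa> where \<kappa>: "inj_on \<kappa> (I - {l0})" "\<kappa> ` (I - {l0}) \<subseteq> K - {k0}"
      "\<forall>l\<in>I - {l0}. \<bar>lam (\<kappa> l) - \<mu> l\<bar> \<le> \<epsilon>"
    by blast
  have I: "I = insert l0 (I - {l0})" using l0 by auto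
  have "inj_on (\<kappa>(l0 := k0)) I" "(\<kappa>(l0 := k0)) ` I \<subseteq> K"
    "\<forall>l\<in>I. \<bar>lam ((\<kappa>(l0 := k0)) l) - \<mu> l\<bar> \<le> \<epsilon>"
    using \<kappa> k0 by (subst I; auto simp: inj_on_def W_def)+
  then show ?case by blast
qed

lemma quadratic_form_bound:
  fixes c :: "'i \<Rightarrow> complex" and G :: "'i \<Rightarrow> 'i \<Rightarrow> complex"
  assumes S: "finite S" and diag: "\<forall>l\<in>S. Re (G l l) \<le> K"
  shows "Re (\<Sum>l\<in>S. \<Sum>l'\<in>S. c l * cnj (c l') * G l l')
           \<le> (\<Sum>l\<in>S. (cmod (c l))\<^sup>2) * (K + (\<Sum>l\<in>S. \<Sum>l'\<in>S - {l}. cmod (G l l')))"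
proof -
  define C where "C = (\<Sum>l\<in>S. (cmod (c l))\<^sup>2)"
  have C_ge: "cmod (c l) * cmod (c l') \<le> C" if "l \<in> S" "l' \<in> S" for l l'
  proof -
    have "(cmod (c l))\<^sup>2 \<le> C" "(cmod (c l'))\<^sup>2 \<le> C"
      unfolding C_def using S that by (auto intro: member_le_sum)
    moreover have "2 * (cmod (c l) * cmod (c l')) \<le> (cmod (c l))\<^sup>2 + (cmod (c l'))\<^sup>2"
      using sum_squares_bound[of "cmod (c l)" "cmod (c l')"] by (simp add: power2_eq_square)
    ultimately show ?thesis by linarith
  qed
  have row: "Re (\<Sum>l'\<in>S. c l * cnj (c l') * G l l')
      \<le> (cmod (c l))\<^sup>2 * K + C * (\<Sum>l'\<in>S - {l}. cmod (G l l'))" if l: "l \<in> S" for l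
  proof -
    have "Re (\<Sum>l'\<in>S. c l * cnj (c l') * G l l')
        = Re (c l * cnj (c l) * G l l) + (\<Sum>l'\<in>S - {l}. Re (c l * cnj (c l') * G l l'))"
      using S l by (simp add: sum.remove Re_sum)
    also have "Re (c l * cnj (c l) * G l l) = (cmod (c l))\<^sup>2 * Re (G l l)"
      by (simp flip: complex_norm_square)
    also have "\<dots> \<le> (cmod (c l))\<^sup>2 * K" using diag l by (simp add: mult_left_mono)
    also have "(\<Sum>l'\<in>S - {l}. Re (c l * cnj (c l') * G l l')) \<le> (\<Sum>l'\<in>S - {l}. C * cmod (G l l'))"
    proof (rule sum_mono)
      fix l' assume "l' \<in> S - {l}"
      have "Re (c l * cnj (c l') * G l l') \<le> cmod (c l) * cmod (c l') * cmod (G l l')"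
        using complex_Re_le_cmod by (metis norm_mult complex_mod_cnj)
      also have "\<dots> \<le> C * cmod (G l l')"
        using C_ge l \<open>l' \<in> S - {l}\<close> by (intro mult_right_mono) auto
      finally show "Re (c l * cnj (c l') * G l l') \<le> C * cmod (G l l')" .
    qed
    finally show ?thesis by (simp add: sum_distrib_left)
  qed
  have "Re (\<Sum>l\<in>S. \<Sum>l'\<in>S. c l * cnj (c l') * G l l')
      = (\<Sum>l\<in>S. Re (\<Sum>l'\<in>S. c l * cnj (c l') * G l l'))"
    by (rule Re_sum)
  also have "\<dots> \<le> (\<Sum>l\<in>S. (cmod (c l))\<^sup>2 * K + C * (\<Sum>l'\<in>S - {l}. cmod (G l l')))"
    using row by (rule sum_mono)
  also have "\<dots> = C * (K + (\<Sum>l\<in>S. \<Sum>l'\<in>S - {l}. cmod (G l l')))"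
    by (simp add: C_def sum.distrib sum_distrib_left sum_distrib_right algebra_simps)
  finally show ?thesis by (simp add: C_def)
qed

definition lincomb :: "('i \<Rightarrow> complex) \<Rightarrow> ('i \<Rightarrow> 's \<Rightarrow> complex) \<Rightarrow> 'i set \<Rightarrow> 's \<Rightarrow> complex" where
  "lincomb c f S = (\<lambda>s. \<Sum>i\<in>S. c i * f i s)"

lemma lincomb_insert:
  "finite S \<Longrightarrow> i \<notin> S \<Longrightarrow> lincomb c f (insert i S) = cadd (cscale (c i) (f i)) (lincomb c f S)"
  by (simp add: lincomb_def cadd_def cscale_def)

lemma cdiff_eq_cadd: "cdiff x y = cadd x (cscale (-1) y)"
  by (simp add: cdiff_def cadd_def cscale_def)

locale dirac_operator =
  fixes V :: "('s \<Rightarrow> complex) set"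
    and h :: "('s \<Rightarrow> complex) \<Rightarrow> ('s \<Rightarrow> complex) \<Rightarrow> complex"
    and D :: "('s \<Rightarrow> complex) \<Rightarrow> ('s \<Rightarrow> complex)"
    and e :: "nat \<Rightarrow> ('s \<Rightarrow> complex)"
    and lam :: "nat \<Rightarrow> real"
  assumes dirac: "dirac_model V h D e lam"
begin

lemma zero_in: "(\<lambda>s. 0) \<in> V"
  and add_in: "x \<in> V \<Longrightarrow> y \<in> V \<Longrightarrow> cadd x y \<in> V"
  and scale_in: "x \<in> V \<Longrightarrow> cscale c x \<in> V"
  using dirac[unfolded dirac_model_def csubspace_def] by blast+

lemma hermitian_form_h: "hermitian_form V h"
  using dirac unfolding dirac_model_def by blast

lemma h_add_left: "x \<in> V \<Longrightarrow> y \<in> V \<Longrightarrow> z \<in> V \<Longrightarrow> h (cadd x y) z = h x z + h y z"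
  using hermitian_form_h unfolding hermitian_form_def by blast

lemma h_scale_left: "x \<in> V \<Longrightarrow> y \<in> V \<Longrightarrow> h (cscale c x) y = c * h x y"
  using hermitian_form_h unfolding hermitian_form_def by blast

lemma h_cnj_swap: "x \<in> V \<Longrightarrow> y \<in> V \<Longrightarrow> h x y = cnj (h y x)"
  using hermitian_form_h unfolding hermitian_form_def by blast

lemma sqnorm_nonneg: "x \<in> V \<Longrightarrow> 0 \<le> sqnorm h x"
  using hermitian_form_h unfolding hermitian_form_def sqnorm_def by blast

lemma D_in: "x \<in> V \<Longrightarrow> D x \<in> V"
  and D_add: "x \<in> V \<Longrightarrow> y \<in> V \<Longrightarrow> D (cadd x y) = cadd (D x) (D y)"
  and D_scale: "x \<in> V \<Longrightarrow> D (cscale c x) = cscale c (D x)"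
  and D_symmetric: "x \<in> V \<Longrightarrow> y \<in> V \<Longrightarrow> h (D x) y = h x (D y)"
  and e_in: "e k \<in> V"
  and e_orthonormal: "h (e j) (e k) = (if j = k then 1 else 0)"
  and D_e: "D (e k) = cscale (complex_of_real (lam k)) (e k)"
  and eigen_expansion: "x \<in> V \<Longrightarrow> (\<lambda>n. sqnorm h (cdiff x (lincomb (\<lambda>k. h x (e k)) e {..<n}))) \<longlonglongrightarrow> 0"
  and finite_eigenvalues_bounded: "finite {k. \<bar>lam k\<bar> \<le> r}"
  using dirac[unfolded dirac_model_def] unfolding lincomb_def by blast+

lemma finite_eigenvalue_window: "finite {k. a \<le> lam k \<and> lam k \<le> b}"
  by (rule finite_subset[OF _ finite_eigenvalues_bounded[of "\<bar>a\<bar> + \<bar>b\<bar>"]]) auto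

lemma diff_in: "x \<in> V \<Longrightarrow> y \<in> V \<Longrightarrow> cdiff x y \<in> V"
  by (simp add: cdiff_eq_cadd add_in scale_in)

lemma h_add_right:
  assumes "x \<in> V" "y \<in> V" "z \<in> V"
  shows "h x (cadd y z) = h x y + h x z"
proof -
  have "h x (cadd y z) = cnj (h (cadd y z) x)" using assms by (intro h_cnj_swap add_in)
  also have "\<dots> = cnj (h y x) + cnj (h z x)" using assms by (simp add: h_add_left)
  finally show ?thesis using h_cnj_swap[of x y] h_cnj_swap[of x z] assms by simp
qed

lemma h_scale_right:
  assumes "x \<in> V" "y \<in> V"
  shows "h x (cscale c y) = cnj c * h x y"
proof -
  have "h x (cscale c y) = cnj (h (cscale c y) x)" using assms by (intro h_cnj_swap scale_in)
  also have "\<dots> = cnj c * cnj (h y x)" using assms by (simp add: h_scale_left)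
  finally show ?thesis using h_cnj_swap[of x y] assms by simp
qed

lemma h_diff_left: "x \<in> V \<Longrightarrow> y \<in> V \<Longrightarrow> z \<in> V \<Longrightarrow> h (cdiff x y) z = h x z - h y z"
  by (simp add: cdiff_eq_cadd h_add_left scale_in h_scale_left)

lemma h_diff_right: "x \<in> V \<Longrightarrow> y \<in> V \<Longrightarrow> z \<in> V \<Longrightarrow> h x (cdiff y z) = h x y - h x z"
  by (simp add: cdiff_eq_cadd h_add_right scale_in h_scale_right)

lemma h_self_real: "x \<in> V \<Longrightarrow> h x x = complex_of_real (sqnorm h x)"
  using h_cnj_swap[of x x] by (simp add: sqnorm_def complex_eq_iff)

lemma lincomb_in: "finite S \<Longrightarrow> (\<And>i. i \<in> S \<Longrightarrow> f i \<in> V) \<Longrightarrow> lincomb c f S \<in> V"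
proof (induction S rule: finite_induct)
  case empty
  then show ?case using zero_in by (simp add: lincomb_def)
next
  case (insert i S)
  then show ?case by (simp add: lincomb_insert add_in scale_in)
qed

lemma h_lincomb_left:
  "finite S \<Longrightarrow> (\<And>i. i \<in> S \<Longrightarrow> f i \<in> V) \<Longrightarrow> y \<in> V \<Longrightarrow>
     h (lincomb c f S) y = (\<Sum>i\<in>S. c i * h (f i) y)"
proof (induction S rule: finite_induct)
  case empty
  then show ?case using h_scale_left[of y y 0] by (simp add: lincomb_def cscale_def)
next
  case (insert i S)
  then show ?case by (simp add: lincomb_insert h_add_left scale_in lincomb_in h_scale_left)
qed

lemma h_lincomb_right:
  assumes "finite S" "\<And>i. i \<in> S \<Longrightarrow> f i \<in> V" "x \<in> V"
  shows "h x (lincomb c f S) = (\<Sum>i\<in>S. cnj (c i) * h x (f i))"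
proof -
  have "h x (lincomb c f S) = cnj (h (lincomb c f S) x)"
    using assms by (intro h_cnj_swap lincomb_in)
  also have "\<dots> = (\<Sum>i\<in>S. cnj (c i) * cnj (h (f i) x))" using assms by (simp add: h_lincomb_left)
  finally show ?thesis using h_cnj_swap[of x] assms by simp
qed

lemma h_lincomb_lincomb:
  assumes "finite S" "\<And>i. i \<in> S \<Longrightarrow> f i \<in> V" "finite T" "\<And>j. j \<in> T \<Longrightarrow> g j \<in> V"
  shows "h (lincomb c f S) (lincomb d g T) = (\<Sum>i\<in>S. \<Sum>j\<in>T. c i * cnj (d j) * h (f i) (g j))"
proof -
  have "h (lincomb c f S) (lincomb d g T) = (\<Sum>i\<in>S. c i * h (f i) (lincomb d g T))"
    using assms by (intro h_lincomb_left lincomb_in)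
  also have "\<dots> = (\<Sum>i\<in>S. \<Sum>j\<in>T. c i * cnj (d j) * h (f i) (g j))"
    using assms by (simp add: h_lincomb_right sum_distrib_left mult.assoc)
  finally show ?thesis .
qed

lemma sqnorm_lincomb_orthonormal:
  assumes S: "finite S" and f: "\<And>i. i \<in> S \<Longrightarrow> f i \<in> V"
    and orth: "\<And>i j. i \<in> S \<Longrightarrow> j \<in> S \<Longrightarrow> h (f i) (f j) = (if i = j then 1 else 0)"
  shows "sqnorm h (lincomb c f S) = (\<Sum>i\<in>S. (cmod (c i))\<^sup>2)"
proof -
  have "h (lincomb c f S) (lincomb c f S) = (\<Sum>i\<in>S. c i * cnj (c i))"
    using S f by (simp add: h_lincomb_lincomb orth if_distrib cong: if_cong)
  also have "\<dots> = complex_of_real (\<Sum>i\<in>S. (cmod (c i))\<^sup>2)"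
    by (simp only: of_real_sum complex_norm_square)
  finally show ?thesis by (simp add: sqnorm_def)
qed

lemma D_lincomb:
  "finite S \<Longrightarrow> (\<And>i. i \<in> S \<Longrightarrow> f i \<in> V) \<Longrightarrow> D (lincomb c f S) = lincomb c (\<lambda>i. D (f i)) S"
proof (induction S rule: finite_induct)
  case empty
  then show ?case using D_scale[OF zero_in, of 0] by (simp add: lincomb_def cscale_def)
next
  case (insert i S)
  then show ?case by (simp add: lincomb_insert D_add scale_in lincomb_in D_scale)
qed

lemma parseval_sums:
  assumes x: "x \<in> V"
  shows "(\<lambda>k. (cmod (h x (e k)))\<^sup>2) sums sqnorm h x"
proof -
  define a where "a k = h x (e k)" for k
  define p where "p n = lincomb a e {..<n}" for n
  define s where "s n = (\<Sum>k<n. (cmod (a k))\<^sup>2)" for n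
  have p_in: "p n \<in> V" for n unfolding p_def by (intro lincomb_in e_in) simp
  have "h (p n) x = (\<Sum>k<n. a k * cnj (a k))" for n
    unfolding p_def using x by (simp add: h_lincomb_left e_in a_def flip: h_cnj_swap)
  then have px: "h (p n) x = complex_of_real (s n)" for n
    by (simp only: s_def of_real_sum complex_norm_square)
  have xp: "h x (p n) = complex_of_real (s n)" for n
    using h_cnj_swap[OF x p_in] px by simp
  have pp: "h (p n) (p n) = complex_of_real (s n)" for n
    using h_self_real[OF p_in] unfolding p_def s_def
    by (simp add: sqnorm_lincomb_orthonormal e_in e_orthonormal)
  have "sqnorm h (cdiff x (p n)) = sqnorm h x - s n" for n
    using x p_in by (simp add: sqnorm_def h_diff_left h_diff_right diff_in px xp pp)
  moreover have "(\<lambda>n. sqnorm h (cdiff x (p n))) \<longlonglongrightarrow> 0"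
    unfolding p_def a_def by (rule eigen_expansion[OF x])
  ultimately have "(\<lambda>n. sqnorm h x - (sqnorm h x - s n)) \<longlonglongrightarrow> sqnorm h x - 0"
    by (intro tendsto_intros) simp
  then show ?thesis by (simp add: sums_def s_def a_def)
qed

definition shifted :: "real \<Rightarrow> ('s \<Rightarrow> complex) \<Rightarrow> ('s \<Rightarrow> complex)" where
  "shifted g x = cdiff (D x) (cscale (complex_of_real g) x)"

lemma shifted_in: "x \<in> V \<Longrightarrow> shifted g x \<in> V"
  by (simp add: shifted_def diff_in D_in scale_in)

lemma h_shifted_e: "x \<in> V \<Longrightarrow> h (shifted g x) (e k) = complex_of_real (lam k - g) * h x (e k)"
  by (simp add: shifted_def h_diff_left D_in scale_in e_in D_symmetric D_e h_scale_right
      h_scale_left algebra_simps)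

lemma sqnorm_shifted_gt:
  assumes x: "x \<in> V" and pos: "0 < sqnorm h x" and r: "0 \<le> r"
    and gap: "\<And>k. \<bar>lam k - g\<bar> \<le> r \<Longrightarrow> h x (e k) = 0"
  shows "r\<^sup>2 * sqnorm h x < sqnorm h (shifted g x)"
proof -
  define f where "f k = ((lam k - g)\<^sup>2 - r\<^sup>2) * (cmod (h x (e k)))\<^sup>2" for k
  have "(\<lambda>k. (lam k - g)\<^sup>2 * (cmod (h x (e k)))\<^sup>2) sums sqnorm h (shifted g x)"
    using parseval_sums[OF shifted_in[OF x]]
    by (simp add: h_shifted_e[OF x] norm_mult power_mult_distrib del: of_real_diff)
  then have f_sums: "f sums (sqnorm h (shifted g x) - r\<^sup>2 * sqnorm h x)"
    unfolding f_def left_diff_distrib by (intro sums_diff sums_mult parseval_sums x)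
  have f_nonneg: "0 \<le> f k" for k
  proof (cases "\<bar>lam k - g\<bar> \<le> r")
    case False
    then have "r\<^sup>2 \<le> \<bar>lam k - g\<bar>\<^sup>2" using r by (intro power_mono) auto
    then show ?thesis by (simp add: f_def)
  qed (simp add: f_def gap)
  have "\<exists>k. h x (e k) \<noteq> 0"
  proof (rule ccontr)
    assume "\<nexists>k. h x (e k) \<noteq> 0"
    then have "(\<lambda>k. 0) sums sqnorm h x" using parseval_sums[OF x] by simp
    then show False using pos sums_unique2[OF _ sums_zero] by force
  qed
  then obtain k where k: "h x (e k) \<noteq> 0" by blast
  then have "r < \<bar>lam k - g\<bar>" using gap by force
  then have "r\<^sup>2 < \<bar>lam k - g\<bar>\<^sup>2" using r by (intro power_strict_mono) auto
  then have "0 < f k" using k by (simp add: f_def)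
  then have "0 < suminf f" using f_sums f_nonneg by (intro suminf_pos2[of f k]) (auto simp: sums_summable)
  then show ?thesis using sums_unique[OF f_sums] by simp
qed

lemma shifted_lincomb:
  "finite S \<Longrightarrow> (\<And>i. i \<in> S \<Longrightarrow> f i \<in> V) \<Longrightarrow>
     shifted g (lincomb c f S) = lincomb c (\<lambda>i. shifted g (f i)) S"
  using D_lincomb[of S f c] by (simp add: shifted_def lincomb_def cdiff_def cscale_def sum_subtractf
      sum_distrib_left algebra_simps)

lemma sqnorm_add_real_scale:
  assumes x: "x \<in> V" and y: "y \<in> V"
  shows "sqnorm h (cadd x (cscale (complex_of_real t) y))
           = sqnorm h x + 2 * t * Re (h x y) + t\<^sup>2 * sqnorm h y"
proof -
  have "h (cadd x (cscale (complex_of_real t) y)) (cadd x (cscale (complex_of_real t) y))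
      = h x x + t * h x y + t * h y x + t\<^sup>2 * h y y"
    using x y by (simp add: h_add_left h_add_right h_scale_left h_scale_right add_in scale_in
        power2_eq_square algebra_simps)
  moreover have "Re (h y x) = Re (h x y)" using h_cnj_swap[OF y x] by simp
  ultimately show ?thesis by (simp add: sqnorm_def)
qed

lemma Re_h_unit_square_le:
  assumes x: "x \<in> V" and y: "y \<in> V" and unit: "sqnorm h y = 1"
  shows "(Re (h x y))\<^sup>2 \<le> sqnorm h x"
proof -
  define s where "s = Re (h x y)"
  have "0 \<le> sqnorm h (cadd x (cscale (complex_of_real (- s)) y))"
    using x y by (intro sqnorm_nonneg add_in scale_in)
  also have "\<dots> = sqnorm h x - s\<^sup>2"
    unfolding sqnorm_add_real_scale[OF x y] unit by (simp add: s_def power2_eq_square)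
  finally show ?thesis by (simp add: s_def)
qed

end

locale approximate_eigensystem = dirac_operator V h D e lam
  for V :: "('s \<Rightarrow> complex) set" and h D e lam +
  fixes L :: nat and \<delta> :: real and \<psi> :: "nat \<Rightarrow> ('s \<Rightarrow> complex)" and \<mu> :: "nat \<Rightarrow> real"
  assumes delta_nonneg: "\<delta> \<ge> 0"
    and psi_in: "\<forall>l\<in>{1..L}. \<psi> l \<in> V"
    and orthonormal: "\<forall>l\<in>{1..L}. \<forall>l'\<in>{1..L}. h (\<psi> l) (\<psi> l') = (if l = l' then 1 else 0)"
    and approx_eig: "\<forall>l\<in>{1..L}.
          sqnorm h (cdiff (D (\<psi> l)) (cscale (complex_of_real (\<mu> l)) (\<psi> l))) \<le> \<delta>"
    and off_diag: "\<forall>l\<in>{1..L}. \<forall>l'\<in>{1..L}. l \<noteq> l' \<longrightarrow> h (D (\<psi> l)) (\<psi> l') = 0"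
    and cross_sum: "(\<Sum>l\<in>{1..L}. \<Sum>l'\<in>{1..L} - {l}. cmod (h (D (\<psi> l)) (D (\<psi> l')))) \<le> \<delta>"
begin

lemma sqnorm_shifted_psi_le:
  assumes l: "l \<in> {1..L}" and g: "\<bar>\<mu> l - g\<bar> \<le> \<rho>"
  shows "sqnorm h (shifted g (\<psi> l)) \<le> (\<rho> + sqrt (2 * \<delta>))\<^sup>2 - \<delta>"
proof -
  define r where "r = shifted (\<mu> l) (\<psi> l)"
  define t where "t = \<mu> l - g"
  define s where "s = Re (h r (\<psi> l))"
  have p: "\<psi> l \<in> V" "sqnorm h (\<psi> l) = 1" using psi_in orthonormal l by (auto simp: sqnorm_def)
  have r: "r \<in> V" "sqnorm h r \<le> \<delta>"
    using approx_eig l shifted_in[OF p(1)] by (auto simp: r_def shifted_def)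
  have "\<bar>s\<bar> \<le> sqrt \<delta>"
    using Re_h_unit_square_le[OF r(1) p] r(2) unfolding s_def by (intro real_le_rsqrt) simp
  also have "\<dots> \<le> sqrt (2 * \<delta>)" using delta_nonneg by simp
  finally have "t * s \<le> \<rho> * sqrt (2 * \<delta>)"
    using g abs_ge_self[of "t * s"] mult_mono[of "\<bar>t\<bar>" \<rho> "\<bar>s\<bar>" "sqrt (2 * \<delta>)"]
    by (simp add: t_def abs_mult order_trans[OF abs_ge_zero g])
  moreover have "t\<^sup>2 \<le> \<rho>\<^sup>2" using g by (simp add: t_def abs_le_square_iff[symmetric])
  moreover have "shifted g (\<psi> l) = cadd r (cscale (complex_of_real t) (\<psi> l))"
    by (auto simp: shifted_def r_def t_def cdiff_def cadd_def cscale_def algebra_simps)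
  then have "sqnorm h (shifted g (\<psi> l)) = sqnorm h r + 2 * t * s + t\<^sup>2"
    using sqnorm_add_real_scale[OF r(1) p(1)] p(2) by (simp add: s_def)
  ultimately show ?thesis
    using r(2) delta_nonneg by (simp add: power2_eq_square algebra_simps)
qed

lemma h_shifted_psi_off_diag:
  assumes "l \<in> {1..L}" "l' \<in> {1..L}" "l \<noteq> l'"
  shows "h (shifted g (\<psi> l)) (shifted g (\<psi> l')) = h (D (\<psi> l)) (D (\<psi> l'))"
proof -
  have psi: "\<psi> l \<in> V" "\<psi> l' \<in> V" using assms psi_in by auto
  have "h (D (\<psi> l)) (\<psi> l') = 0" "h (\<psi> l) (\<psi> l') = 0" using assms off_diag orthonormal by auto
  moreover have "h (\<psi> l) (D (\<psi> l')) = 0" using calculation D_symmetric[OF psi] by simp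
  ultimately show ?thesis
    using psi by (simp add: shifted_def h_diff_left h_diff_right h_scale_left h_scale_right
        D_in scale_in diff_in)
qed

lemma sqnorm_shifted_lincomb_le:
  assumes S: "S \<subseteq> {1..L}" and g: "\<forall>l\<in>S. \<bar>\<mu> l - g\<bar> \<le> \<rho>"
  shows "sqnorm h (shifted g (lincomb c \<psi> S)) \<le> (\<rho> + sqrt (2 * \<delta>))\<^sup>2 * (\<Sum>l\<in>S. (cmod (c l))\<^sup>2)"
proof -
  define G where "G l l' = h (shifted g (\<psi> l)) (shifted g (\<psi> l'))" for l l'
  have fin: "finite S" using S finite_subset by blast
  have psi: "\<psi> l \<in> V" if "l \<in> S" for l using S psi_in that by auto
  have G_off: "G l l' = h (D (\<psi> l)) (D (\<psi> l'))" if "l \<in> S" "l' \<in> S" "l \<noteq> l'" for l l'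
    unfolding G_def using S that by (intro h_shifted_psi_off_diag) auto
  have "(\<Sum>l\<in>S. \<Sum>l'\<in>S - {l}. cmod (G l l'))
      = (\<Sum>l\<in>S. \<Sum>l'\<in>S - {l}. cmod (h (D (\<psi> l)) (D (\<psi> l'))))"
    using G_off by (intro sum.cong refl) auto
  also have "\<dots> \<le> (\<Sum>l\<in>S. \<Sum>l'\<in>{1..L} - {l}. cmod (h (D (\<psi> l)) (D (\<psi> l'))))"
    using S by (intro sum_mono sum_mono2) auto
  also have "\<dots> \<le> (\<Sum>l\<in>{1..L}. \<Sum>l'\<in>{1..L} - {l}. cmod (h (D (\<psi> l)) (D (\<psi> l'))))"
    using S by (intro sum_mono2) (auto intro: sum_nonneg)
  also have "\<dots> \<le> \<delta>" by (rule cross_sum)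
  finally have cross: "(\<Sum>l\<in>S. \<Sum>l'\<in>S - {l}. cmod (G l l')) \<le> \<delta>" .
  have "sqnorm h (shifted g (lincomb c \<psi> S)) = Re (\<Sum>l\<in>S. \<Sum>l'\<in>S. c l * cnj (c l') * G l l')"
    using fin psi by (simp add: sqnorm_def shifted_lincomb h_lincomb_lincomb shifted_in G_def)
  also have "\<dots> \<le> (\<Sum>l\<in>S. (cmod (c l))\<^sup>2)
      * ((\<rho> + sqrt (2 * \<delta>))\<^sup>2 - \<delta> + (\<Sum>l\<in>S. \<Sum>l'\<in>S - {l}. cmod (G l l')))"
    using S g sqnorm_shifted_psi_le by (intro quadratic_form_bound fin) (auto simp: G_def sqnorm_def)
  also have "\<dots> \<le> (\<Sum>l\<in>S. (cmod (c l))\<^sup>2) * (\<rho> + sqrt (2 * \<delta>))\<^sup>2"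
    using cross by (intro mult_left_mono sum_nonneg) auto
  finally show ?thesis by (simp add: mult.commute)
qed

lemma card_mu_window_le:
  "card {l\<in>{1..L}. \<alpha> \<le> \<mu> l \<and> \<mu> l \<le> \<beta>}
     \<le> card {k. \<alpha> - sqrt (2 * \<delta>) \<le> lam k \<and> lam k \<le> \<beta> + sqrt (2 * \<delta>)}"
proof (rule ccontr)
  define \<epsilon> where "\<epsilon> = sqrt (2 * \<delta>)"
  define S where "S = {l\<in>{1..L}. \<alpha> \<le> \<mu> l \<and> \<mu> l \<le> \<beta>}"
  define K where "K = {k. \<alpha> - \<epsilon> \<le> lam k \<and> lam k \<le> \<beta> + \<epsilon>}"
  assume "\<not> ?thesis"
  then have "card K < card S" by (simp add: S_def K_def \<epsilon>_def)
  \<comment> \<open>So some nonzero combination of the \<psi> l with \<mu> l in [\<alpha>, \<beta>] is orthogonal to every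
    eigensection with eigenvalue in [\<alpha> - \<epsilon>, \<beta> + \<epsilon>].\<close>
  then obtain c where c: "\<exists>l\<in>S. c l \<noteq> 0" "\<forall>k\<in>K. (\<Sum>l\<in>S. c l * h (\<psi> l) (e k)) = 0"
    using homogeneous_system_nontrivial_solution[of K S "\<lambda>l k. h (\<psi> l) (e k)"]
    by (auto simp: K_def S_def finite_eigenvalue_window)
  have S: "finite S" "S \<subseteq> {1..L}" by (auto simp: S_def)
  have psi: "\<psi> l \<in> V" if "l \<in> S" for l using S psi_in that by auto
  define \<phi> where "\<phi> = lincomb c \<psi> S"
  have \<phi>: "\<phi> \<in> V" unfolding \<phi>_def using S psi by (intro lincomb_in)
  have sqnorm_\<phi>: "sqnorm h \<phi> = (\<Sum>l\<in>S. (cmod (c l))\<^sup>2)"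
    unfolding \<phi>_def using S psi orthonormal by (intro sqnorm_lincomb_orthonormal) (auto simp: subset_iff)
  also have "\<dots> > 0"
  proof -
    obtain l where l: "l \<in> S" "c l \<noteq> 0" using c(1) by blast
    then have "0 < (cmod (c l))\<^sup>2" by simp
    also have "\<dots> \<le> (\<Sum>l\<in>S. (cmod (c l))\<^sup>2)" using S l by (intro member_le_sum) auto
    finally show ?thesis .
  qed
  finally have "0 < sqnorm h \<phi>" .
  define g where "g = (\<alpha> + \<beta>) / 2"
  define \<rho> where "\<rho> = (\<beta> - \<alpha>) / 2"
  have "\<alpha> \<le> \<beta>" using c(1) by (auto simp: S_def)
  then have "0 \<le> \<rho> + \<epsilon>" using delta_nonneg by (simp add: \<rho>_def \<epsilon>_def)
  have "h \<phi> (e k) = 0" if "\<bar>lam k - g\<bar> \<le> \<rho> + \<epsilon>" for k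
  proof -
    have "k \<in> K" using that by (auto simp: K_def g_def \<rho>_def abs_le_iff field_simps)
    then show ?thesis using c(2) S psi by (simp add: \<phi>_def h_lincomb_left e_in)
  qed
  then have "(\<rho> + \<epsilon>)\<^sup>2 * sqnorm h \<phi> < sqnorm h (shifted g \<phi>)"
    using sqnorm_shifted_gt \<phi> \<open>0 < sqnorm h \<phi>\<close> \<open>0 \<le> \<rho> + \<epsilon>\<close> by blast
  moreover have "sqnorm h (shifted g \<phi>) \<le> (\<rho> + \<epsilon>)\<^sup>2 * (\<Sum>l\<in>S. (cmod (c l))\<^sup>2)"
    unfolding \<phi>_def \<epsilon>_def using S
    by (intro sqnorm_shifted_lincomb_le) (auto simp: S_def g_def \<rho>_def abs_le_iff field_simps)
  ultimately show False using sqnorm_\<phi> by simp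
qed

end

theorem lemma6p4:
  fixes V :: "('s \<Rightarrow> complex) set"
    and h :: "('s \<Rightarrow> complex) \<Rightarrow> ('s \<Rightarrow> complex) \<Rightarrow> complex"
    and D :: "('s \<Rightarrow> complex) \<Rightarrow> ('s \<Rightarrow> complex)"
    and e :: "nat \<Rightarrow> ('s \<Rightarrow> complex)"
    and lam :: "nat \<Rightarrow> real"
    and L :: nat
    and \<delta> :: real
    and \<psi> :: "nat \<Rightarrow> ('s \<Rightarrow> complex)"
    and \<mu> :: "nat \<Rightarrow> real"
  assumes dirac: "dirac_model V h D e lam"
    and delta_nonneg: "\<delta> \<ge> 0"
    and psi_in: "\<forall>l\<in>{1..L}. \<psi> l \<in> V"
    and orthonormal: "\<forall>l\<in>{1..L}. \<forall>l'\<in>{1..L}. h (\<psi> l) (\<psi> l') = (if l = l' then 1 else 0)"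
    and approx_eig: "\<forall>l\<in>{1..L}.
          sqnorm h (cdiff (D (\<psi> l)) (cscale (complex_of_real (\<mu> l)) (\<psi> l))) \<le> \<delta>"
    and off_diag: "\<forall>l\<in>{1..L}. \<forall>l'\<in>{1..L}. l \<noteq> l' \<longrightarrow> h (D (\<psi> l)) (\<psi> l') = 0"
    and cross_sum: "(\<Sum>l\<in>{1..L}. \<Sum>l'\<in>{1..L} - {l}. cmod (h (D (\<psi> l)) (D (\<psi> l')))) \<le> \<delta>"
  shows "\<exists>\<kappa> :: nat \<Rightarrow> nat. inj_on \<kappa> {1..L} \<and>
           (\<forall>l\<in>{1..L}. \<bar>lam (\<kappa> l) - \<mu> l\<bar> \<le> sqrt (2 * \<delta>))"
proof -
  interpret approximate_eigensystem V h D e lam L \<delta> \<psi> \<mu>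
    by unfold_locales (fact assms)+
  have "\<exists>\<kappa>. inj_on \<kappa> {1..L} \<and> \<kappa> ` {1..L} \<subseteq> UNIV
      \<and> (\<forall>l\<in>{1..L}. \<bar>lam (\<kappa> l) - \<mu> l\<bar> \<le> sqrt (2 * \<delta>))"
    using card_mu_window_le by (intro interval_hall_matching) (simp_all add: finite_eigenvalue_window)
  then show ?thesis by blast
qed

end
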